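(* Let $R$ be a domain and let $G$ be a finite undirected graph without loops with vertex set $A=\{a_1,\dots,a_n\}$, $n\geqslant 2$, such that the complement graph $\overline{G}$ is connected. Let $L(A;G)$ be one of $\mathcal{L}(A;G)$, $\mathcal{M}(A;G)$, $\mathcal{N}_m(A;G)$ ($m\geqslant 2$), and suppose $L(A;G)=L_1\oplus L_2$ is a direct sum of two subalgebras such that for every $i\in\{1,\dots,n\}$ we have $(a_i)_1=a_i+g_i$ and $(a_i)_2=-g_i$ with $g_i\in L(A;G)$ and $a_i\notin\mathrm{supp}(\omega_1(g_i))$. Then $\omega_1(g_i)=0$ for all $i$.
   Context: All Lie algebras are over the domain $R$. The complement graph $\overline{G}$ has vertex set $A$, with distinct vertices adjacent iff they are not adjacent in $G$. The partially commutative Lie algebra in a variety $\mathfrak{M}$ with defining graph $G$ is the Lie algebra presented in $\mathfrak{M}$ by generators $A$ and relations $[a_p,a_q]=0$ for all edges $\{a_p,a_q\}$ of $G$. $\mathcal{L}(A;G)$: $\mathfrak{M}$ = all Lie algebras; $\mathcal{M}(A;G)$: metabelian Lie algebras ($[[x,y],[z,t]]=0$); $\mathcal{N}_m(A;G)$: nilpotent Lie algebras of degree $m$ (all Lie products of $m+1$ elements vanish). Since all relations and identities are multi-homogeneous, every element $h$ is uniquely a sum of nonzero multi-homogeneous components (multi-degree of a Lie monomial = vector counting occurrences of each $a_p$). $\mathrm{supp}(h)$ is the set of $a_p$ occurring with nonzero exponent in the multi-degree of some component of $h$; $\omega_1(h)$ is the sum of the components of length $1$. A direct sum $L=L_1\oplus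 L_2$ of subalgebras means $L_1,L_2$ are subalgebras, $L=L_1\oplus L_2$ as $R$-modules and $[L_1,L_2]=0$; for $h\in L$, $(h)_1\in L_1$, $(h)_2\in L_2$ are the unique elements with $h=(h)_1+(h)_2$. *)

theory Defs
  imports "HOL-Library.Poly_Mapping"
begin

text \<open>Lie monomials / nonassociative words: binary trees with leaves labelled by generators.\<close>
datatype 'a mtree = Leaf 'a | Br "'a mtree" "'a mtree"

type_synonym ('a, 'r) malg = "'a mtree \<Rightarrow>\<^sub>0 'r"

definition gen :: "'a \<Rightarrow> ('a, 'r::comm_ring_1) malg" where
  "gen a = Poly_Mapping.single (Leaf a) 1"

definition smul :: "'r::comm_ring_1 \<Rightarrow> ('a, 'r) malg \<Rightarrow> ('a, 'r) malg" where
  "smul r f = Poly_Mapping.map (\<lambda>c. r * c) f"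

definition mmul :: "('a, 'r::comm_ring_1) malg \<Rightarrow> ('a, 'r) malg \<Rightarrow> ('a, 'r) malg" where
  "mmul f g = (\<Sum>s\<in>Poly_Mapping.keys f. \<Sum>t\<in>Poly_Mapping.keys g.
      Poly_Mapping.single (Br s t) (Poly_Mapping.lookup f s * Poly_Mapping.lookup g t))"

inductive_set ideal_gen :: "('a, 'r::comm_ring_1) malg set \<Rightarrow> ('a, 'r) malg set"
  for S where
  base: "x \<in> S \<Longrightarrow> x \<in> ideal_gen S"
| zero: "0 \<in> ideal_gen S"
| add: "x \<in> ideal_gen S \<Longrightarrow> y \<in> ideal_gen S \<Longrightarrow> x + y \<in> ideal_gen S"
| scal: "x \<in> ideal_gen S \<Longrightarrow> smul r x \<in> ideal_gen S"
| mult_l: "x \<in> ideal_gen S \<Longrightarrow> mmul y x \<in> ideal_gen S"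
| mult_r: "x \<in> ideal_gen S \<Longrightarrow> mmul x y \<in> ideal_gen S"

datatype variety = AllLie | Metabelian | Nilpotent nat

inductive is_prod :: "nat \<Rightarrow> ('a, 'r::comm_ring_1) malg \<Rightarrow> bool" where
  one: "is_prod 1 x"
| br: "is_prod i x \<Longrightarrow> is_prod j y \<Longrightarrow> is_prod (i + j) (mmul x y)"

fun identities :: "variety \<Rightarrow> ('a, 'r::comm_ring_1) malg set" where
  "identities AllLie = {}"
| "identities Metabelian = {mmul (mmul x y) (mmul z t) | x y z t. True}"
| "identities (Nilpotent m) = {x. is_prod (Suc m) x}"

text \<open>The partially commutative Lie algebra L(A;G) in the variety is the
  quotient of the magma algebra by this ideal.\<close>
definition pc_ideal :: "variety \<Rightarrow> ('a \<Rightarrow> 'a \<Rightarrow> bool) \<Rightarrow> ('a, 'r::comm_ring_1) malg set" where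
  "pc_ideal V E = ideal_gen
     ({mmul x x | x. True}
      \<union> {mmul x (mmul y z) + mmul y (mmul z x) + mmul z (mmul x y) | x y z. True}
      \<union> {mmul (gen p) (gen q) | p q. E p q}
      \<union> identities V)"

text \<open>A subalgebra of the quotient L = M/I, represented by its preimage in M:
  an R-submodule of M containing I and closed under the bracket.\<close>
definition subalg_pre :: "('a, 'r::comm_ring_1) malg set \<Rightarrow> ('a, 'r) malg set \<Rightarrow> bool" where
  "subalg_pre I S \<longleftrightarrow> I \<subseteq> S \<and> 0 \<in> S \<and> (\<forall>x\<in>S. \<forall>y\<in>S. x + y \<in> S)
     \<and> (\<forall>r. \<forall>x\<in>S. smul r x \<in> S) \<and> (\<forall>x\<in>S. \<forall>y\<in>S. mmul x y \<in> S)"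

text \<open>L = L1 \<oplus> L2 (direct sum of subalgebras), in terms of preimages S1, S2:
  L1 + L2 = L, L1 \<inter> L2 = 0, [L1,L2] = 0.\<close>
definition direct_sum_pre ::
  "('a, 'r::comm_ring_1) malg set \<Rightarrow> ('a, 'r) malg set \<Rightarrow> ('a, 'r) malg set \<Rightarrow> bool" where
  "direct_sum_pre I S1 S2 \<longleftrightarrow> subalg_pre I S1 \<and> subalg_pre I S2
     \<and> (\<forall>h. \<exists>x\<in>S1. \<exists>y\<in>S2. h = x + y)
     \<and> S1 \<inter> S2 = I
     \<and> (\<forall>x\<in>S1. \<forall>y\<in>S2. mmul x y \<in> I)"

definition omega1 :: "('a::finite, 'r::comm_ring_1) malg \<Rightarrow> ('a, 'r) malg" where
  "omega1 h = (\<Sum>a\<in>UNIV. Poly_Mapping.single (Leaf a) (Poly_Mapping.lookup h (Leaf a)))"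

definition supp :: "('a, 'r::comm_ring_1) malg \<Rightarrow> 'a set" where
  "supp h = (\<Union>t\<in>Poly_Mapping.keys h. set_mtree t)"

definition compl_adj :: "('a \<Rightarrow> 'a \<Rightarrow> bool) \<Rightarrow> 'a \<Rightarrow> 'a \<Rightarrow> bool" where
  "compl_adj E x y \<longleftrightarrow> x \<noteq> y \<and> \<not> E x y"

definition compl_connected :: "('a \<Rightarrow> 'a \<Rightarrow> bool) \<Rightarrow> bool" where
  "compl_connected E \<longleftrightarrow> (\<forall>x y. (compl_adj E)\<^sup>*\<^sup>* x y)"

end

theory Submission
  imports Defs
begin

text \<open>All defining relations and identities lie in degree \<open>\<ge> 2\<close>, and the only ones of
  degree 2 are \<open>[x, x]\<close> and \<open>[a\<^sub>p, a\<^sub>q]\<close> for edges. Hence the linear part \<open>x\<^sub>p\<close> and the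
  skew coefficient of \<open>[a\<^sub>p, a\<^sub>q]\<close> are well defined on \<open>L\<close> for every non-edge \<open>p, q\<close>.
  As \<open>[L\<^sub>1, L\<^sub>2] = 0\<close>, that coefficient of \<open>[x, y]\<close>, the minor \<open>x\<^sub>p y\<^sub>q - x\<^sub>q y\<^sub>p\<close>, vanishes for
  \<open>x \<in> L\<^sub>1\<close>, \<open>y \<in> L\<^sub>2\<close>. For \<open>x = a\<^sub>q + g\<^sub>q\<close>, whose \<open>a\<^sub>q\<close>-coefficient is 1 by hypothesis, this
  gives \<open>y\<^sub>p = 0\<close> for all \<open>y \<in> L\<^sub>2\<close>; connectedness of the complement provides such a \<open>q\<close>
  for every \<open>p\<close>, so \<open>L\<^sub>2\<close>, which contains every \<open>-g\<^sub>i\<close>, has no linear part.\<close>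

lemma lookup_smul: "Poly_Mapping.lookup (smul r f) k = r * Poly_Mapping.lookup f k"
  by (simp add: smul_def map.rep_eq when_def)

lemma lookup_gen:
  "Poly_Mapping.lookup (gen a :: ('a, 'r::comm_ring_1) malg) k = (if k = Leaf a then 1 else 0)"
  by (simp add: gen_def lookup_single when_def)

lemma lookup_mmul_Leaf: "Poly_Mapping.lookup (mmul f g) (Leaf c) = 0"
  by (simp add: mmul_def lookup_sum lookup_single when_def)

lemma lookup_mmul_Br:
  "Poly_Mapping.lookup (mmul f g) (Br s t) = Poly_Mapping.lookup f s * Poly_Mapping.lookup g t"
proof -
  have "Poly_Mapping.lookup (mmul f g) (Br s t) =
    (\<Sum>s'\<in>Poly_Mapping.keys f. if s' = s then
      (\<Sum>t'\<in>Poly_Mapping.keys g. if t' = t then Poly_Mapping.lookup f s' * Poly_Mapping.lookup g t' else 0)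
     else 0)"
    unfolding mmul_def lookup_sum lookup_single when_def by (intro sum.cong) auto
  also have "\<dots> = Poly_Mapping.lookup f s * Poly_Mapping.lookup g t"
    by (simp add: in_keys_iff)
  finally show ?thesis .
qed

definition linear_free :: "('a, 'r::comm_ring_1) malg \<Rightarrow> bool" where
  "linear_free h \<longleftrightarrow> (\<forall>c. Poly_Mapping.lookup h (Leaf c) = 0)"

lemma linear_free_mmul [simp]: "linear_free (mmul f g)"
  by (simp add: linear_free_def lookup_mmul_Leaf)

lemma omega1_eq_0_iff: "omega1 h = 0 \<longleftrightarrow> linear_free h"
proof
  assume "omega1 h = 0"
  then have "Poly_Mapping.lookup (omega1 h) (Leaf c) = 0" for c
    by simp
  then show "linear_free h"
    by (simp add: linear_free_def omega1_def lookup_sum lookup_single when_def)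
qed (simp add: linear_free_def omega1_def)

lemma lookup_Leaf_eq_0_if_notin_supp_omega1:
  assumes "a \<notin> supp (omega1 h)"
  shows "Poly_Mapping.lookup h (Leaf a) = 0"
proof -
  have "Leaf a \<notin> Poly_Mapping.keys (omega1 h)"
    using assms by (force simp: supp_def)
  then have "Poly_Mapping.lookup (omega1 h) (Leaf a) = 0"
    by (simp add: in_keys_iff)
  then show ?thesis
    by (simp add: omega1_def lookup_sum lookup_single when_def)
qed

text \<open>The coefficient of \<open>[a\<^sub>p, a\<^sub>q]\<close> once the quadratic part is read modulo anticommutativity.\<close>

definition skew_coeff :: "'a \<Rightarrow> 'a \<Rightarrow> ('a, 'r::comm_ring_1) malg \<Rightarrow> 'r" where
  "skew_coeff p q h =
     Poly_Mapping.lookup h (Br (Leaf p) (Leaf q)) - Poly_Mapping.lookup h (Br (Leaf q) (Leaf p))"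

lemma skew_coeff_mmul:
  "skew_coeff p q (mmul f g) =
     Poly_Mapping.lookup f (Leaf p) * Poly_Mapping.lookup g (Leaf q)
     - Poly_Mapping.lookup f (Leaf q) * Poly_Mapping.lookup g (Leaf p)"
  by (simp add: skew_coeff_def lookup_mmul_Br)

lemma skew_coeff_mmul_linear_free:
  "linear_free f \<or> linear_free g \<Longrightarrow> skew_coeff p q (mmul f g) = 0"
  by (auto simp: skew_coeff_mmul linear_free_def)

lemma is_prod_pos: "is_prod k x \<Longrightarrow> 1 \<le> k"
  by (induction rule: is_prod.induct) auto

lemma is_prod_linear_free: "is_prod k x \<Longrightarrow> 2 \<le> k \<Longrightarrow> linear_free x"
  by (cases rule: is_prod.cases) auto

lemma is_prod_split:
  assumes "is_prod k x" "3 \<le> k"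
  obtains u v where "x = mmul u v" "linear_free u \<or> linear_free v"
  using assms(1)
proof (cases rule: is_prod.cases)
  case (br i u j v)
  then have "2 \<le> i \<or> 2 \<le> j"
    using is_prod_pos assms(2) by fastforce
  then show ?thesis
    using br that is_prod_linear_free by blast
qed (use assms(2) in simp)

lemma pc_relator_linear_free_skew_coeff:
  assumes "\<not> E p q" "\<not> E q p"
    and var: "\<And>m. V = Nilpotent m \<Longrightarrow> 2 \<le> m"
    and x: "x \<in> {mmul y y | y. True}
      \<union> {mmul y (mmul z w) + mmul z (mmul w y) + mmul w (mmul y z) | y z w. True}
      \<union> {mmul (gen p') (gen q') | p' q'. E p' q'}
      \<union> identities V"
  shows "linear_free x \<and> skew_coeff p q x = 0"
  using x
proof (elim UnE)
  assume "x \<in> identities V"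
  then obtain u v where "x = mmul u v" "linear_free u \<or> linear_free v"
  proof (cases V)
    case (Nilpotent m)
    with \<open>x \<in> identities V\<close> var show ?thesis
      using is_prod_split[of "Suc m" x] that by auto
  qed (use \<open>x \<in> identities V\<close> that in auto)
  then show ?thesis
    using skew_coeff_mmul_linear_free by simp
next
  assume "x \<in> {mmul (gen p') (gen q') | p' q'. E p' q'}"
  then show ?thesis
    using assms(1,2) by (auto simp: skew_coeff_mmul lookup_gen)
qed (auto simp: skew_coeff_mmul mult.commute skew_coeff_def linear_free_def lookup_add
    lookup_mmul_Br lookup_mmul_Leaf)

lemma pc_ideal_linear_free_skew_coeff:
  assumes "\<not> E p q" "\<not> E q p"
    and var: "\<And>m. V = Nilpotent m \<Longrightarrow> 2 \<le> m"
    and h: "h \<in> pc_ideal V E"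
  shows "linear_free h \<and> skew_coeff p q h = 0"
  using h unfolding pc_ideal_def
proof (induction rule: ideal_gen.induct)
  case (base x)
  then show ?case
    using pc_relator_linear_free_skew_coeff[of E p q V] assms(1-3) by blast
next
  case (mult_l x y)
  then show ?case
    by (auto intro: skew_coeff_mmul_linear_free)
next
  case (mult_r x y)
  then show ?case
    by (auto intro: skew_coeff_mmul_linear_free)
qed (auto simp: linear_free_def skew_coeff_def lookup_add lookup_smul right_diff_distrib)

lemma direct_sum_linear_minor_eq_0:
  assumes ds: "direct_sum_pre (pc_ideal V E) S1 S2"
    and "\<not> E p q" "\<not> E q p"
    and var: "\<And>m. V = Nilpotent m \<Longrightarrow> 2 \<le> m"
    and "x \<in> S1" "y \<in> S2"
  shows "Poly_Mapping.lookup x (Leaf p) * Poly_Mapping.lookup y (Leaf q) =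
    Poly_Mapping.lookup x (Leaf q) * Poly_Mapping.lookup y (Leaf p)"
proof -
  have "mmul x y \<in> pc_ideal V E"
    using ds \<open>x \<in> S1\<close> \<open>y \<in> S2\<close> by (simp add: direct_sum_pre_def)
  then have "skew_coeff p q (mmul x y) = 0"
    using pc_ideal_linear_free_skew_coeff[of E p q V] assms(2-4) by blast
  then show ?thesis
    by (simp add: skew_coeff_mmul)
qed

lemma direct_sum_gen_decomp:
  assumes "direct_sum_pre I S1 S2"
  obtains h where "gen q + h \<in> S1" "- h \<in> S2"
proof -
  obtain x y where "x \<in> S1" "y \<in> S2" "gen q = x + y"
    using assms unfolding direct_sum_pre_def by blast
  then show ?thesis
    using that[of "- y"] by (simp add: algebra_simps)
qed

lemma direct_sum_second_lookup_eq_0: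
  assumes ds: "direct_sum_pre (pc_ideal V E) S1 S2"
    and "p \<noteq> q" "\<not> E p q" "\<not> E q p"
    and var: "\<And>m. V = Nilpotent m \<Longrightarrow> 2 \<le> m"
    and h: "gen q + h \<in> S1" "- h \<in> S2" "Poly_Mapping.lookup h (Leaf q) = 0"
    and "y \<in> S2"
  shows "Poly_Mapping.lookup y (Leaf p) = 0"
proof -
  have minor: "Poly_Mapping.lookup h (Leaf p) * Poly_Mapping.lookup z (Leaf q) =
      Poly_Mapping.lookup z (Leaf p)" if "z \<in> S2" for z
  proof -
    have "Poly_Mapping.lookup (gen q + h) (Leaf p) * Poly_Mapping.lookup z (Leaf q) =
        Poly_Mapping.lookup (gen q + h) (Leaf q) * Poly_Mapping.lookup z (Leaf p)"
      using direct_sum_linear_minor_eq_0[of V E S1 S2 p q] ds assms(3-5) h(1) that by blast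
    then show ?thesis
      using h(3) \<open>p \<noteq> q\<close> by (simp add: lookup_add lookup_gen)
  qed
  have "Poly_Mapping.lookup h (Leaf p) = 0"
    using minor[OF h(2)] h(3) by simp
  then show ?thesis
    using minor[OF \<open>y \<in> S2\<close>] by simp
qed

lemma compl_connected_obtain_compl_adj:
  fixes E :: "'a \<Rightarrow> 'a \<Rightarrow> bool"
  assumes "compl_connected E" "2 \<le> card (UNIV :: 'a set)"
  obtains q where "compl_adj E p q"
proof -
  have "card (UNIV :: 'a set) \<noteq> card {p}"
    using assms(2) by simp
  then obtain d where "d \<noteq> p"
    by (metis UNIV_eq_I singletonI singleton_iff)
  moreover have "(compl_adj E)\<^sup>*\<^sup>* p d"
    using assms(1) by (simp add: compl_connected_def)
  ultimately show ?thesis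
    using that by (auto elim: converse_rtranclpE)
qed

theorem lemma3:
  fixes E :: "'a::finite \<Rightarrow> 'a \<Rightarrow> bool"
    and V :: variety
    and S1 S2 :: "('a, 'r::idom) malg set"
  assumes n2: "card (UNIV :: 'a set) \<ge> 2"
    and sym: "\<And>x y. E x y \<longleftrightarrow> E y x"
    and irrefl: "\<And>x. \<not> E x x"
    and conn: "compl_connected E"
    and var: "\<And>m. V = Nilpotent m \<Longrightarrow> m \<ge> 2"
    and ds: "direct_sum_pre (pc_ideal V E) S1 S2"
    and hyp: "\<And>a g. gen a + g \<in> S1 \<Longrightarrow> - g \<in> S2 \<Longrightarrow> a \<notin> supp (omega1 g)"
  shows "\<forall>a g. gen a + g \<in> S1 \<longrightarrow> - g \<in> S2 \<longrightarrow> omega1 g = 0"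
proof (intro allI impI)
  fix a g
  assume "- g \<in> S2"
  show "omega1 g = 0"
    unfolding omega1_eq_0_iff linear_free_def
  proof
    fix p
    obtain q where "compl_adj E p q"
      using compl_connected_obtain_compl_adj[OF conn n2] .
    then have "p \<noteq> q" "\<not> E p q" "\<not> E q p"
      using sym by (auto simp: compl_adj_def)
    obtain h where h: "gen q + h \<in> S1" "- h \<in> S2"
      using direct_sum_gen_decomp[OF ds] .
    then have "Poly_Mapping.lookup h (Leaf q) = 0"
      using hyp lookup_Leaf_eq_0_if_notin_supp_omega1 by blast
    then have "Poly_Mapping.lookup (- g) (Leaf p) = 0"
      using direct_sum_second_lookup_eq_0[OF ds \<open>p \<noteq> q\<close> \<open>\<not> E p q\<close> \<open>\<not> E q p\<close> var h]
        \<open>- g \<in> S2\<close> by blast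
    then show "Poly_Mapping.lookup g (Leaf p) = 0"
      by simp
  qed
qed

end
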